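(* Let $q$ be a prime power, $r\ge 1$ an integer, and $\mathcal{S}$ a $q^r$-divisible spanning set of $q^{r+1}$ points in $\mathrm{PG}(v-1,q)$. If $\mathcal{S}$ contains a full affine $(r+1)$-space, i.e. there exist an $(r+1)$-space $L$ and an $r$-space $F\subseteq L$ such that every point of $L$ not contained in $F$ belongs to $\mathcal{S}$, then $\mathcal{S}$ is an $(r+1)$-cylinder.
   Context: $\mathrm{PG}(v-1,q)$ is the projective space of $\mathbb{F}_q^v$; a $k$-space is a $k$-dimensional subspace of $\mathbb{F}_q^v$ (points are $1$-spaces, hyperplanes $(v-1)$-spaces). A set $\mathcal{S}$ of points is spanning if its points span $\mathbb{F}_q^v$, and it is $q^r$-divisible if $|\mathcal{S}\cap H|\equiv|\mathcal{S}|\pmod{q^r}$ for every hyperplane $H$. An $(r+1)$-cylinder is a multiset of $q^{r+1}$ points which arises as the union (counted with multiplicity) of the point sets $L_1\setminus F,\dots,L_q\setminus F$, where $L_1,\dots,L_q$ are $(r+1)$-spaces and $F$ is an $r$-space contained in every $L_i$ ($L_i\setminus F$ denotes the set of points of $L_i$ not in $F$). *)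

theory Defs
  imports "HOL-Analysis.Analysis" "HOL-Library.Multiset"
begin

text \<open>Ambient space: F_q^v is the type 'F ^ 'n with 'F a finite field (q = CARD('F))
  and v = CARD('n). A k-space is a linear subspace of dimension k; a point is a 1-space.\<close>

definition kspace :: "nat \<Rightarrow> ('F::{field,finite} ^ 'n) set \<Rightarrow> bool" where
  "kspace k W \<longleftrightarrow> vec.subspace W \<and> vec.dim W = k"

definition ppoint :: "('F::{field,finite} ^ 'n) set \<Rightarrow> bool" where
  "ppoint P \<longleftrightarrow> kspace 1 P"

definition hyperplane :: "('F::{field,finite} ^ 'n) set \<Rightarrow> bool" where
  "hyperplane H \<longleftrightarrow> kspace (CARD('n) - 1) H"

definition points_of :: "('F::{field,finite} ^ 'n) set \<Rightarrow> ('F ^ 'n) set set" where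
  "points_of W = {P. ppoint P \<and> P \<subseteq> W}"

definition spanning :: "('F::{field,finite} ^ 'n) set set \<Rightarrow> bool" where
  "spanning S \<longleftrightarrow> vec.span (\<Union>S) = UNIV"

definition qr_divisible :: "nat \<Rightarrow> ('F::{field,finite} ^ 'n) set set \<Rightarrow> bool" where
  "qr_divisible r S \<longleftrightarrow>
     (\<forall>H. hyperplane H \<longrightarrow> card (S \<inter> points_of H) mod CARD('F) ^ r = card S mod CARD('F) ^ r)"

definition cylinder :: "nat \<Rightarrow> ('F::{field,finite} ^ 'n) set multiset \<Rightarrow> bool" where
  "cylinder r C \<longleftrightarrow> size C = CARD('F) ^ (r + 1) \<and>
     (\<exists>F Ls. kspace r F \<and> length Ls = CARD('F) \<and>
        (\<forall>L\<in>set Ls. kspace (r + 1) L \<and> F \<subseteq> L) \<and>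
        C = sum_list (map (\<lambda>L. mset_set (points_of L - points_of F)) Ls))"

end

theory Submission
  imports Defs
begin

text \<open>
  Let \<open>F \<subseteq> L\<close> be the given \<open>r\<close>- and \<open>(r+1)\<close>-spaces. A hyperplane not through \<open>F\<close> meets the
  affine part \<open>L \ F\<close>, so by divisibility it contains at least \<open>q\<^sup>r\<close> points of \<open>S\<close>. Double
  counting incidences between \<open>S\<close> and these hyperplanes, on which a point of \<open>F\<close> lies less
  often than a point outside \<open>F\<close>, forces equality everywhere: \<open>S\<close> avoids \<open>F\<close>, and every
  hyperplane not through \<open>F\<close> contains exactly \<open>q\<^sup>r\<close> points of \<open>S\<close>. Counting along pencils of
  hyperplanes propagates this constancy to the sections with any subspace through a point
  \<open>x \<in> F\<close>; inside the plane \<open>\<langle>p, x\<rangle>\<close> it shows that \<open>\<langle>p\<rangle> \<in> S\<close> forces \<open>\<langle>p + x\<rangle> \<in> S\<close>.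
  Hence \<open>S\<close> is a disjoint union of affine parts \<open>\<langle>p, F\<rangle> \ F\<close> of size \<open>q\<^sup>r\<close>, exactly \<open>q\<close> of them.
\<close>

section \<open>Linear forms, points and hyperplanes\<close>

text \<open>
  Hyperplanes are handled as kernels of nonzero linear forms, so each hyperplane is counted
  \<open>q - 1\<close> times below; this common factor does not affect the double counting arguments.
\<close>

definition dotp :: "'F::field ^ 'n \<Rightarrow> 'F ^ 'n \<Rightarrow> 'F" where
  "dotp a y = (\<Sum>i\<in>UNIV. a $ i * y $ i)"

definition ker_form :: "'F::field ^ 'n \<Rightarrow> ('F ^ 'n) set" where
  "ker_form a = {y. dotp a y = 0}"

definition forms_off :: "('F::field ^ 'n) set \<Rightarrow> ('F ^ 'n) set" where
  "forms_off F = {a. \<exists>x\<in>F. dotp a x \<noteq> 0}"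

lemma dotp_add_left: "dotp (a + b) y = dotp a y + dotp b y"
  by (simp add: dotp_def distrib_right sum.distrib)

lemma dotp_add_right: "dotp a (y + z) = dotp a y + dotp a z"
  by (simp add: dotp_def distrib_left sum.distrib)

lemma dotp_diff_left: "dotp (a - b) y = dotp a y - dotp b y"
  by (simp add: dotp_def left_diff_distrib sum_subtractf)

lemma dotp_diff_right: "dotp a (y - z) = dotp a y - dotp a z"
  by (simp add: dotp_def right_diff_distrib sum_subtractf)

lemma dotp_scale_left: "dotp (c *s a) y = c * dotp a y"
  by (simp add: dotp_def sum_distrib_left mult.assoc)

lemma dotp_scale_right: "dotp a (c *s y) = c * dotp a y"
  by (simp add: dotp_def sum_distrib_left mult.left_commute)

lemma dotp_zero_left [simp]: "dotp 0 y = 0"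
  by (simp add: dotp_def)

lemma dotp_zero_right [simp]: "dotp a 0 = 0"
  by (simp add: dotp_def)

lemmas dotp_simps = dotp_add_left dotp_add_right dotp_diff_left dotp_diff_right
  dotp_scale_left dotp_scale_right

lemma subspace_ker_form: "vec.subspace (ker_form a)"
  unfolding vec.subspace_def ker_form_def by (auto simp: dotp_simps)

lemma span_singleton_subset_iff: "vec.subspace W \<Longrightarrow> vec.span {y} \<subseteq> W \<longleftrightarrow> y \<in> W"
  using vec.span_minimal vec.span_base by blast

lemma span_singleton_subset_ker_form: "vec.span {y} \<subseteq> ker_form a \<longleftrightarrow> dotp a y = 0"
  using span_singleton_subset_iff[OF subspace_ker_form] by (simp add: ker_form_def)

lemma span_singleton_scale:
  fixes y :: "'F::field ^ 'n"
  assumes "c \<noteq> 0"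
  shows "vec.span {c *s y} = vec.span {y}"
proof -
  have "y = inverse c *s (c *s y)" using assms by simp
  then have "y \<in> vec.span {c *s y}" by (metis vec.span_base vec.span_scale singletonI)
  moreover have "c *s y \<in> vec.span {y}" by (simp add: vec.span_base vec.span_scale)
  ultimately show ?thesis unfolding vec.span_eq by simp
qed

lemma ppoint_span:
  assumes "(y :: 'F::{field,finite} ^ 'n) \<noteq> 0"
  shows "ppoint (vec.span {y})"
proof -
  have "vec.independent {y}" using assms by (simp add: vec.independent_insert)
  then show ?thesis unfolding ppoint_def kspace_def by (simp add: vec.dim_span_eq_card_independent)
qed

lemma ppointE:
  assumes "ppoint (P :: ('F::{field,finite} ^ 'n) set)"
  obtains y where "y \<noteq> 0" "P = vec.span {y}"
proof -
  have sub: "vec.subspace P" and dim: "vec.dim P = 1"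
    using assms unfolding ppoint_def kspace_def by auto
  obtain B where B: "B \<subseteq> P" "vec.independent B" "P \<subseteq> vec.span B" "card B = vec.dim P"
    using vec.basis_exists by blast
  then obtain y where By: "B = {y}" using dim by (auto simp: card_Suc_eq)
  show ?thesis
  proof
    show "y \<noteq> 0" using B(2) By vec.dependent_zero by auto
    show "P = vec.span {y}" using B By sub vec.span_minimal by blast
  qed
qed

lemma exists_form_separating:
  fixes W :: "('F::{field,finite} ^ 'n) set"
  assumes sub: "vec.subspace W" and y: "y \<notin> W"
  shows "\<exists>e. (\<forall>w\<in>W. dotp e w = 0) \<and> dotp e y = 1"
proof -
  obtain B where B: "B \<subseteq> W" "vec.independent B" "W \<subseteq> vec.span B" "card B = vec.dim W"
    using vec.basis_exists by blast
  have spB: "vec.span B = W" using B sub vec.span_minimal by blast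
  have ind: "vec.independent (insert y B)"
    using B(2) y spB by (simp add: vec.independent_insertI)
  define i0 where "i0 = (undefined :: 'n)"
  define f where "f = vec.construct (insert y B) (\<lambda>z. if z = y then axis i0 (1::'F) else 0)"
  have lin: "Vector_Spaces.linear (*s) (*s) f" unfolding f_def
    by (rule vec.linear_construct[OF ind])
  have fy: "f y = axis i0 1"
    unfolding f_def using vec.construct_basis[OF ind, of y "\<lambda>z. if z = y then axis i0 1 else 0"]
    by simp
  have fB: "f b = 0" if "b \<in> B" for b
  proof -
    have "b \<noteq> y" using that y B(1) by auto
    then show ?thesis unfolding f_def
      using vec.construct_basis[OF ind, of b "\<lambda>z. if z = y then axis i0 1 else 0"] that by simp
  qed
  have fW: "f w = 0" if "w \<in> W" for w
  proof -
    interpret lf: Vector_Spaces.linear "(*s)" "(*s)" f using lin .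
    show ?thesis using lf.eq_0_on_span[of B w] fB that spB by auto
  qed
  define e where "e = (\<chi> i. (f (axis i 1)) $ i0)"
  have de: "dotp e z = (f z) $ i0" for z
    unfolding dotp_def e_def linear_componentwise[OF lin, of z i0]
    by (simp add: mult.commute)
  show ?thesis
    by (rule exI[of _ e]) (simp add: de fW fy)
qed

lemma in_subspace_if_annihilated:
  fixes W :: "('F::{field,finite} ^ 'n) set"
  assumes "vec.subspace W" and "\<And>b. \<forall>w\<in>W. dotp b w = 0 \<Longrightarrow> dotp b y = 0"
  shows "y \<in> W"
proof (rule ccontr)
  assume "y \<notin> W"
  then obtain b where "\<forall>w\<in>W. dotp b w = 0" "dotp b y = 1"
    using exists_form_separating[OF assms(1)] by blast
  then show False using assms(2) by simp
qed

lemma hyperplane_ker_form: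
  fixes a :: "'F::{field,finite} ^ 'n"
  assumes "a \<noteq> 0"
  shows "hyperplane (ker_form a)"
proof -
  obtain i where ai: "a $ i \<noteq> 0" using assms by (metis vec_eq_iff zero_index)
  define e where "e = axis i (inverse (a $ i))"
  have de: "dotp a e = 1"
  proof -
    have "dotp a e = (\<Sum>j\<in>UNIV. if j = i then a $ i * inverse (a $ i) else 0)"
      unfolding dotp_def e_def by (intro sum.cong) (auto simp: axis_def)
    then show ?thesis using ai by simp
  qed
  have eK: "e \<notin> ker_form a" using de by (simp add: ker_form_def)
  have spK: "vec.span (ker_form a) = ker_form a" using subspace_ker_form by simp
  have "vec.span (insert e (ker_form a)) = UNIV"
  proof -
    have "z \<in> vec.span (insert e (ker_form a))" for z
    proof -
      have "z - dotp a z *s e \<in> ker_form a" by (simp add: ker_form_def dotp_simps de)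
      then show ?thesis unfolding vec.span_breakdown_eq spK by blast
    qed
    then show ?thesis by auto
  qed
  then have "vec.dim (insert e (ker_form a)) = CARD('n)"
    by (metis vec.dim_span vec.dim_UNIV card_cart_basis)
  moreover have "vec.dim (insert e (ker_form a)) = vec.dim (ker_form a) + 1"
    using eK spK by (simp add: vec.dim_insert del: vec.span_eq_iff)
  ultimately have "vec.dim (ker_form a) = CARD('n) - 1" by simp
  then show ?thesis unfolding hyperplane_def kspace_def using subspace_ker_form[of a] by blast
qed

lemma card_subspace:
  fixes W :: "('F::{field,finite} ^ 'n) set"
  assumes sub: "vec.subspace W"
  shows "card W = CARD('F) ^ vec.dim W"
proof -
  obtain B where B: "B \<subseteq> W" "vec.independent B" "W \<subseteq> vec.span B" "card B = vec.dim W"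
    using vec.basis_exists by blast
  have spB: "vec.span B = W" using B sub vec.span_minimal by blast
  have fB: "finite B" by simp
  define g where "g u = (\<Sum>v\<in>B. u v *s v)" for u :: "'F ^ 'n \<Rightarrow> 'F"
  have inj: "inj_on g (PiE B (\<lambda>_. UNIV))"
  proof (rule inj_onI)
    fix u u' assume u: "u \<in> PiE B (\<lambda>_. UNIV)" and u': "u' \<in> PiE B (\<lambda>_. UNIV)" and eq: "g u = g u'"
    have "(\<Sum>v\<in>B. (u v - u' v) *s v) = 0"
      using eq by (simp add: g_def sum_subtractf vec.scale_left_diff_distrib)
    moreover have "\<forall>c. (\<Sum>v\<in>B. c v *s v) = 0 \<longrightarrow> (\<forall>v\<in>B. c v = 0)"
      using B(2) unfolding vec.independent_explicit by blast
    ultimately have "\<forall>v\<in>B. u v - u' v = 0" by (rule mp[OF spec[of _ "\<lambda>v. u v - u' v"], rotated])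
    then show "u = u'" using u u' by (auto simp: PiE_def extensional_def fun_eq_iff)
  qed
  have img: "g ` (PiE B (\<lambda>_. UNIV)) = W"
  proof -
    have "vec.span B = range g" unfolding g_def by (rule vec.span_finite[OF fB])
    moreover have "range g = g ` (PiE B (\<lambda>_. UNIV))"
    proof
      show "range g \<subseteq> g ` (PiE B (\<lambda>_. UNIV))"
      proof
        fix z assume "z \<in> range g"
        then obtain u where z: "z = g u" by auto
        have "g u = g (restrict u B)" unfolding g_def by (intro sum.cong) auto
        moreover have "restrict u B \<in> PiE B (\<lambda>_. UNIV)" by auto
        ultimately show "z \<in> g ` (PiE B (\<lambda>_. UNIV))" using z by blast
      qed
    qed auto
    ultimately show ?thesis using spB by simp
  qed
  have "card W = card (PiE B (\<lambda>_. UNIV :: 'F set))"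
    using card_image[OF inj] img by simp
  also have "\<dots> = CARD('F) ^ card B" by (simp add: card_PiE)
  finally show ?thesis using B(4) by simp
qed

lemma card_field_ge_2: "CARD('F::{field,finite}) \<ge> 2"
proof -
  have "card {0::'F, 1} = 2" by simp
  moreover have "card {0::'F, 1} \<le> CARD('F)" by (rule card_mono) auto
  ultimately show ?thesis by simp
qed

section \<open>Counting linear forms\<close>

lemma card_filter_eq_sum: "finite A \<Longrightarrow> card {x\<in>A. R x} = (\<Sum>x\<in>A. if R x then 1 else 0)"
  by (simp add: sum.inter_filter[symmetric])

lemma card_eq_sum_card_level_sets:
  fixes g :: "'a \<Rightarrow> 'b::finite"
  assumes "finite A"
  shows "card A = (\<Sum>c\<in>UNIV. card {a\<in>A. g a = c})"
proof -
  have "A = (\<Union>c\<in>UNIV. {a\<in>A. g a = c})" by auto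
  moreover have "card (\<Union>c\<in>UNIV. {a\<in>A. g a = c}) = (\<Sum>c\<in>UNIV. card {a\<in>A. g a = c})"
    using assms by (intro card_UN_disjoint) auto
  ultimately show ?thesis by simp
qed

lemma card_level_set_eq:
  fixes p e :: "'F::{field,finite} ^ 'n"
  assumes e: "dotp e p = 1"
    and closed_add: "\<And>a. a \<in> A \<Longrightarrow> a + c *s e \<in> A"
    and closed_diff: "\<And>a. a \<in> A \<Longrightarrow> a - c *s e \<in> A"
  shows "card {a\<in>A. dotp a p = c} = card {a\<in>A. dotp a p = 0}"
proof -
  have "bij_betw (\<lambda>a. a + c *s e) {a\<in>A. dotp a p = 0} {a\<in>A. dotp a p = c}"
  proof (rule bij_betw_byWitness[where f'="\<lambda>a. a - c *s e"])
    show "(\<lambda>a. a + c *s e) ` {a \<in> A. dotp a p = 0} \<subseteq> {a \<in> A. dotp a p = c}"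
      using closed_add by (auto simp: dotp_simps e)
    show "(\<lambda>a. a - c *s e) ` {a \<in> A. dotp a p = c} \<subseteq> {a \<in> A. dotp a p = 0}"
      using closed_diff by (auto simp: dotp_simps e)
  qed auto
  then show ?thesis by (simp add: bij_betw_same_card)
qed

lemma card_forms_off_point_outside:
  fixes F :: "('F::{field,finite} ^ 'n) set"
  assumes subF: "vec.subspace F" and P: "ppoint P" "\<not> P \<subseteq> F"
  shows "card (forms_off F) = CARD('F) * card {a\<in>forms_off F. P \<subseteq> ker_form a}"
proof -
  obtain p where p: "P = vec.span {p}" using ppointE[OF P(1)] by blast
  then have pF: "p \<notin> F" using P(2) span_singleton_subset_iff[OF subF] by simp
  have P_ker: "P \<subseteq> ker_form a \<longleftrightarrow> dotp a p = 0" for a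
    unfolding p span_singleton_subset_ker_form ..
  obtain e where e: "\<forall>w\<in>F. dotp e w = 0" "dotp e p = 1"
    using exists_form_separating[OF subF pF] by blast
  have "card (forms_off F) = (\<Sum>c\<in>(UNIV::'F set). card {a\<in>forms_off F. dotp a p = c})"
    by (rule card_eq_sum_card_level_sets) simp
  also have "\<dots> = (\<Sum>c\<in>(UNIV::'F set). card {a\<in>forms_off F. dotp a p = 0})"
    by (intro sum.cong refl card_level_set_eq[OF e(2)]) (auto simp: forms_off_def dotp_simps e(1))
  finally show ?thesis by (simp add: P_ker)
qed

lemma card_forms_off_point_inside:
  fixes F :: "('F::{field,finite} ^ 'n) set"
  assumes subF: "vec.subspace F" and P: "ppoint P" "P \<subseteq> F"
  shows "CARD('F) * card {a\<in>forms_off F. P \<subseteq> ker_form a} < card (forms_off F)"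
proof -
  obtain p where p0: "p \<noteq> 0" and p: "P = vec.span {p}" using ppointE[OF P(1)] by blast
  then have pF: "p \<in> F" using P(2) span_singleton_subset_iff[OF subF] by simp
  have P_ker: "P \<subseteq> ker_form a \<longleftrightarrow> dotp a p = 0" for a
    unfolding p span_singleton_subset_ker_form ..
  define q where "q = CARD('F)"
  define N where "N = card {a\<in>forms_off F. dotp a p = 0}"
  define Z where "Z = {a :: 'F ^ 'n. dotp a p = 0}"
  obtain e where e: "dotp e p = 1"
    using exists_form_separating[OF vec.subspace_single_0, of p] p0 by auto
  have card_level: "card {a\<in>UNIV. dotp a p = c} = card Z" for c
    unfolding Z_def using card_level_set_eq[OF e, of UNIV c] by simp
  have level_off: "{a\<in>forms_off F. dotp a p = c} = {a\<in>UNIV. dotp a p = c}" if "c \<noteq> 0" for c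
    using that pF by (auto simp: forms_off_def)
  have "N < card Z"
  proof -
    have "{a\<in>forms_off F. dotp a p = 0} \<subseteq> Z - {0}" by (auto simp: Z_def forms_off_def)
    then have "N \<le> card (Z - {0})" unfolding N_def by (intro card_mono) auto
    moreover have "0 \<in> Z" by (simp add: Z_def)
    moreover have "card Z > 0" using \<open>0 \<in> Z\<close> by (auto simp: card_gt_0_iff)
    ultimately show ?thesis by (simp add: card_Diff_singleton)
  qed
  have "card (forms_off F) = (\<Sum>c\<in>(UNIV::'F set). card {a\<in>forms_off F. dotp a p = c})"
    by (rule card_eq_sum_card_level_sets) simp
  also have "\<dots> = N + (\<Sum>c\<in>UNIV - {0}. card {a\<in>forms_off F. dotp a p = c})"
    unfolding N_def by (subst sum.remove[of _ 0]) auto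
  also have "\<dots> = N + (\<Sum>c\<in>UNIV - {0::'F}. card Z)"
    using level_off card_level by (intro arg_cong2[where f="(+)"] sum.cong) auto
  also have "\<dots> = N + (q - 1) * card Z"
    by (simp add: q_def card_Diff_singleton)
  finally have "card (forms_off F) = N + (q - 1) * card Z" .
  moreover have "(q - 1) * N < (q - 1) * card Z"
    using \<open>N < card Z\<close> card_field_ge_2[where 'F='F] by (simp add: q_def)
  moreover have "q * N = N + (q - 1) * N"
    using card_field_ge_2[where 'F='F] by (simp add: q_def algebra_simps)
  ultimately show ?thesis unfolding q_def N_def P_ker by linarith
qed

section \<open>Hyperplane sections of the point set\<close>

lemma exists_point_outside_in_ker_form:
  fixes L F :: "('F::{field,finite} ^ 'n) set"
  assumes subL: "vec.subspace L" and subF: "vec.subspace F" and FL: "F \<subseteq> L"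
    and l: "l \<in> L" "l \<notin> F" and a: "a \<in> forms_off F"
  shows "\<exists>y\<in>L. y \<notin> F \<and> dotp a y = 0"
proof -
  obtain x where x: "x \<in> F" "dotp a x \<noteq> 0" using a by (auto simp: forms_off_def)
  define y where "y = l - (dotp a l / dotp a x) *s x"
  have "y \<in> L" unfolding y_def
    using l(1) x(1) FL subL by (intro vec.subspace_diff vec.subspace_scale) auto
  moreover have "y \<notin> F"
  proof
    assume "y \<in> F"
    then have "y + (dotp a l / dotp a x) *s x \<in> F"
      using x(1) subF by (intro vec.subspace_add vec.subspace_scale) auto
    then show False using l(2) by (simp add: y_def)
  qed
  moreover have "dotp a y = 0" using x(2) by (simp add: y_def dotp_simps)
  ultimately show ?thesis by blast
qed

lemma card_ker_form_section_ge:
  fixes S :: "('F::{field,finite} ^ 'n) set set"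
  assumes pts: "\<forall>P\<in>S. ppoint P" and div: "qr_divisible r S"
    and cS: "card S = CARD('F) ^ (r + 1)"
    and subL: "vec.subspace L" and subF: "vec.subspace F" and FL: "F \<subseteq> L" and LF: "\<not> L \<subseteq> F"
    and LFS: "points_of L - points_of F \<subseteq> S"
    and a: "a \<in> forms_off F"
  shows "CARD('F) ^ r \<le> card {P\<in>S. P \<subseteq> ker_form a}"
proof -
  have "a \<noteq> 0" using a by (auto simp: forms_off_def)
  then have "hyperplane (ker_form a)" by (rule hyperplane_ker_form)
  moreover have "S \<inter> points_of (ker_form a) = {P\<in>S. P \<subseteq> ker_form a}"
    using pts by (auto simp: points_of_def)
  ultimately have "card {P\<in>S. P \<subseteq> ker_form a} mod CARD('F) ^ r = card S mod CARD('F) ^ r"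
    using div unfolding qr_divisible_def by auto
  then have dvd: "CARD('F) ^ r dvd card {P\<in>S. P \<subseteq> ker_form a}"
    using cS by (auto simp: mod_eq_0_iff_dvd)
  obtain l where l: "l \<in> L" "l \<notin> F" using LF by blast
  obtain y where y: "y \<in> L" "y \<notin> F" "dotp a y = 0"
    using exists_point_outside_in_ker_form[OF subL subF FL l a] by blast
  have y0: "y \<noteq> 0" using y(2) subF vec.subspace_0 by auto
  have "vec.span {y} \<in> points_of L - points_of F"
    using ppoint_span[OF y0] span_singleton_subset_iff[OF subL] span_singleton_subset_iff[OF subF] y
    by (auto simp: points_of_def)
  then have "vec.span {y} \<in> {P\<in>S. P \<subseteq> ker_form a}"
    using LFS span_singleton_subset_ker_form y(3) by auto
  then have "0 < card {P\<in>S. P \<subseteq> ker_form a}" by (auto simp: card_gt_0_iff)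
  then show ?thesis by (rule dvd_imp_le[OF dvd])
qed

text \<open>
  Double counting incidences between \<open>S\<close> and the forms in \<open>forms_off F\<close>: each such kernel
  contains at least \<open>q\<^sup>r\<close> points of \<open>S\<close>, while each point lies on at most a \<open>1/q\<close> fraction
  of these kernels, strictly less for points of \<open>F\<close>. Since \<open>|S| = q\<^sup>r\<^sup>+\<^sup>1\<close>, both bounds are tight.
\<close>

lemma sections_off_base_uniform:
  fixes S :: "('F::{field,finite} ^ 'n) set set"
  assumes pts: "\<forall>P\<in>S. ppoint P" and div: "qr_divisible r S"
    and cS: "card S = CARD('F) ^ (r + 1)"
    and L: "kspace (r + 1) L" and F: "kspace r F" and FL: "F \<subseteq> L"
    and LFS: "points_of L - points_of F \<subseteq> S"
  shows "\<forall>P\<in>S. \<not> P \<subseteq> F"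
    and "\<forall>a\<in>forms_off F. card {P\<in>S. P \<subseteq> ker_form a} = CARD('F) ^ r"
proof -
  define q where "q = CARD('F)"
  define T where "T = forms_off F"
  define K where "K a = card {P\<in>S. P \<subseteq> ker_form a}" for a
  define N where "N P = card {a\<in>T. P \<subseteq> ker_form a}" for P
  have subF: "vec.subspace F" and subL: "vec.subspace L" using F L by (auto simp: kspace_def)
  have LF: "\<not> L \<subseteq> F" using vec.dim_subset[of L F] F L by (auto simp: kspace_def)
  have K_ge: "q ^ r \<le> K a" if "a \<in> T" for a
    unfolding q_def K_def using card_ker_form_section_ge[OF pts div cS subL subF FL LF LFS] that
    by (simp add: T_def)
  have incidences: "(\<Sum>a\<in>T. K a) = (\<Sum>P\<in>S. N P)"
    unfolding K_def N_def by (simp add: card_filter_eq_sum sum.swap[of _ T S])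
  have N_less: "q * N P < card T" if "P \<in> S" "P \<subseteq> F" for P
    using card_forms_off_point_inside[OF subF bspec[OF pts that(1)] that(2)]
    unfolding q_def N_def T_def .
  have N_eq: "q * N P = card T" if "P \<in> S" "\<not> P \<subseteq> F" for P
    using card_forms_off_point_outside[OF subF bspec[OF pts that(1)] that(2)]
    unfolding q_def N_def T_def by simp
  have N_le: "q * N P \<le> card T" if "P \<in> S" for P
    using N_less[OF that] N_eq[OF that] by (cases "P \<subseteq> F") auto
  have total: "(\<Sum>P\<in>S. card T) = q * (q ^ r * card T)" using cS by (simp add: q_def)
  have "q * (\<Sum>a\<in>T. K a) \<le> q * (q ^ r * card T)"
    unfolding incidences sum_distrib_left total[symmetric] using N_le by (intro sum_mono) auto
  then have sum_K_le: "(\<Sum>a\<in>T. K a) \<le> (\<Sum>a\<in>T. q ^ r)" by (simp add: q_def mult.commute)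
  have sum_K_ge: "(\<Sum>a\<in>T. q ^ r) \<le> (\<Sum>a\<in>T. K a)" using K_ge by (intro sum_mono)
  show "\<forall>P\<in>S. \<not> P \<subseteq> F"
  proof (intro ballI notI)
    fix P0 assume "P0 \<in> S" "P0 \<subseteq> F"
    then have "q * (\<Sum>a\<in>T. K a) < (\<Sum>P\<in>S. card T)"
      unfolding incidences sum_distrib_left using N_le N_less by (intro sum_strict_mono_ex1) auto
    also have "\<dots> = q * (\<Sum>a\<in>T. q ^ r)" using total by simp
    finally show False using sum_K_ge by simp
  qed
  show "\<forall>a\<in>forms_off F. card {P\<in>S. P \<subseteq> ker_form a} = CARD('F) ^ r"
  proof (rule ccontr)
    assume "\<not> ?thesis"
    then obtain a0 where a0: "a0 \<in> T" "K a0 \<noteq> q ^ r" unfolding T_def K_def q_def by blast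
    then have "q ^ r < K a0" using K_ge[OF a0(1)] by simp
    then have "(\<Sum>a\<in>T. q ^ r) < (\<Sum>a\<in>T. K a)"
      using K_ge a0(1) by (intro sum_strict_mono_ex1) auto
    then show False using sum_K_le by simp
  qed
qed

section \<open>Pencils of hyperplanes\<close>

text \<open>
  The kernels of \<open>a + c *s b\<close>, for all scalars \<open>c\<close>, and of \<open>b\<close> form the pencil with axis
  \<open>ker_form a \<inter> ker_form b\<close>: a point off the axis lies on exactly one of them, a point on
  the axis on all \<open>q + 1\<close>.
\<close>

lemma pencil_incidences_point:
  fixes a b :: "'F::{field,finite} ^ 'n"
  assumes "ppoint P"
  shows "(\<Sum>c\<in>UNIV. if P \<subseteq> ker_form (a + c *s b) then 1 else 0)
      + (if P \<subseteq> ker_form b then 1 else 0)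
    = 1 + CARD('F) * (if P \<subseteq> ker_form a \<and> P \<subseteq> ker_form b then 1 else (0::nat))"
proof -
  obtain y where y: "y \<noteq> 0" "P = vec.span {y}" using ppointE[OF assms] by blast
  have eq: "P \<subseteq> ker_form (a + c *s b) \<longleftrightarrow> dotp a y + c * dotp b y = 0" for c
    using y(2) span_singleton_subset_ker_form[of y "a + c *s b"] by (simp add: dotp_simps)
  have s: "(\<Sum>c\<in>UNIV. if P \<subseteq> ker_form (a + c *s b) then 1 else (0::nat))
      = card {c. dotp a y + c * dotp b y = 0}"
    using card_filter_eq_sum[of UNIV "\<lambda>c. dotp a y + c * dotp b y = 0"] eq by simp
  show ?thesis
  proof (cases "dotp b y = 0")
    case True
    then show ?thesis using s y(2) span_singleton_subset_ker_form by auto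
  next
    case False
    have "{c. dotp a y + c * dotp b y = 0} = {- dotp a y / dotp b y}"
    proof -
      have "dotp a y + c * dotp b y = 0 \<longleftrightarrow> c = - dotp a y / dotp b y" for c
        using False by (metis add.commute add_eq_0_iff2 nonzero_eq_divide_eq)
      then show ?thesis by auto
    qed
    then show ?thesis using s y(2) span_singleton_subset_ker_form False by auto
  qed
qed

lemma pencil_incidences:
  fixes a b :: "'F::{field,finite} ^ 'n"
  assumes "\<forall>P\<in>S. ppoint P"
  shows "(\<Sum>c\<in>UNIV. card {P\<in>S. P \<subseteq> ker_form (a + c *s b)}) + card {P\<in>S. P \<subseteq> ker_form b}
    = card S + CARD('F) * card {P\<in>S. P \<subseteq> ker_form a \<and> P \<subseteq> ker_form b}"
proof -
  let ?on = "\<lambda>P a. if P \<subseteq> ker_form a then 1 else (0::nat)"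
  let ?axis = "\<lambda>P. if P \<subseteq> ker_form a \<and> P \<subseteq> ker_form b then 1 else (0::nat)"
  have "(\<Sum>c\<in>UNIV. card {P\<in>S. P \<subseteq> ker_form (a + c *s b)}) + card {P\<in>S. P \<subseteq> ker_form b}
      = (\<Sum>c\<in>UNIV. \<Sum>P\<in>S. ?on P (a + c *s b)) + (\<Sum>P\<in>S. ?on P b)"
    by (simp add: card_filter_eq_sum)
  also have "\<dots> = (\<Sum>P\<in>S. (\<Sum>c\<in>UNIV. ?on P (a + c *s b)) + ?on P b)"
    by (simp add: sum.swap[of _ UNIV S] sum.distrib)
  also have "\<dots> = (\<Sum>P\<in>S. 1 + CARD('F) * ?axis P)"
    using pencil_incidences_point[of _ a b] assms by (intro sum.cong) auto
  also have "\<dots> = (\<Sum>P\<in>S. 1) + (\<Sum>P\<in>S. CARD('F) * ?axis P)"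
    by (rule sum.distrib)
  also have "\<dots> = card S + CARD('F) * card {P\<in>S. P \<subseteq> ker_form a \<and> P \<subseteq> ker_form b}"
    by (simp add: sum_distrib_left[symmetric] card_filter_eq_sum)
  finally show ?thesis .
qed

text \<open>
  Induction on \<open>B\<close>: for \<open>b \<in> B\<close> the pencil through \<open>a\<close> and \<open>b\<close> consists of forms
  \<open>a + c *s b\<close> not vanishing at \<open>x\<close>, whose sections are all equal by induction.
\<close>

lemma card_section_independent:
  fixes x :: "'F::{field,finite} ^ 'n"
  assumes pts: "\<forall>P\<in>S. ppoint P"
    and sections: "\<And>a. dotp a x \<noteq> 0 \<Longrightarrow> card {P\<in>S. P \<subseteq> ker_form a} = K"
    and "finite B" and "\<forall>b\<in>B. dotp b x = 0"
  shows "dotp a x \<noteq> 0 \<Longrightarrow> dotp a' x \<noteq> 0 \<Longrightarrow>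
    card {P\<in>S. P \<subseteq> ker_form a \<and> (\<forall>b\<in>B. P \<subseteq> ker_form b)}
    = card {P\<in>S. P \<subseteq> ker_form a' \<and> (\<forall>b\<in>B. P \<subseteq> ker_form b)}"
  using assms(3,4)
proof (induction B arbitrary: a a' rule: finite_induct)
  case empty
  then show ?case using sections by simp
next
  case (insert b B)
  define S' where "S' = {P\<in>S. \<forall>b\<in>B. P \<subseteq> ker_form b}"
  have pts': "\<forall>P\<in>S'. ppoint P" using pts by (auto simp: S'_def)
  have cut_B: "card {P\<in>S. P \<subseteq> ker_form a0 \<and> (\<forall>b\<in>B. P \<subseteq> ker_form b)}
      = card {P\<in>S'. P \<subseteq> ker_form a0}" for a0
    by (rule arg_cong[where f=card]) (auto simp: S'_def)
  have cut_insert: "card {P\<in>S. P \<subseteq> ker_form a0 \<and> (\<forall>b'\<in>insert b B. P \<subseteq> ker_form b')}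
      = card {P\<in>S'. P \<subseteq> ker_form a0 \<and> P \<subseteq> ker_form b}" for a0
    by (rule arg_cong[where f=card]) (auto simp: S'_def)
  have bx: "dotp b x = 0" and Bx: "\<forall>b\<in>B. dotp b x = 0" using insert.prems by auto
  have pencil: "card S' + CARD('F) * card {P\<in>S'. P \<subseteq> ker_form a0 \<and> P \<subseteq> ker_form b}
      = CARD('F) * card {P\<in>S'. P \<subseteq> ker_form a} + card {P\<in>S'. P \<subseteq> ker_form b}"
    if "dotp a0 x \<noteq> 0" for a0
  proof -
    have "card {P\<in>S'. P \<subseteq> ker_form (a0 + c *s b)} = card {P\<in>S'. P \<subseteq> ker_form a}" for c
    proof -
      have "dotp (a0 + c *s b) x \<noteq> 0" using that bx by (simp add: dotp_simps)
      then show ?thesis using insert.IH[of "a0 + c *s b" a] Bx insert.prems cut_B by simp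
    qed
    then show ?thesis using pencil_incidences[OF pts', of a0 b] by simp
  qed
  have "CARD('F) * card {P\<in>S'. P \<subseteq> ker_form a \<and> P \<subseteq> ker_form b}
      = CARD('F) * card {P\<in>S'. P \<subseteq> ker_form a' \<and> P \<subseteq> ker_form b}"
    using pencil[of a] pencil[of a'] insert.prems by linarith
  then show ?case using cut_insert by simp
qed

section \<open>Closure under translation by the base\<close>

lemma in_span_pair_if_annihilated:
  fixes p x y :: "'F::{field,finite} ^ 'n"
  assumes "\<And>b. dotp b p = 0 \<Longrightarrow> dotp b x = 0 \<Longrightarrow> dotp b y = 0"
  shows "y \<in> vec.span {p, x}"
proof (rule in_subspace_if_annihilated[OF vec.subspace_span])
  fix b assume "\<forall>w\<in>vec.span {p, x}. dotp b w = 0"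
  then show "dotp b y = 0"
    using assms vec.span_base[of p "{p, x}"] vec.span_base[of x "{p, x}"] by simp
qed

lemma not_in_span_translate:
  fixes F :: "('F::{field,finite} ^ 'n) set"
  assumes subF: "vec.subspace F" and pF: "p \<notin> F" and x: "x \<in> F" "x \<noteq> 0" and x': "x' \<in> F"
  shows "x \<notin> vec.span {p + x'}"
proof
  assume "x \<in> vec.span {p + x'}"
  then obtain k where k: "x = k *s (p + x')" by (auto simp: vec.span_singleton)
  then have "k \<noteq> 0" using x(2) by auto
  then have "p = inverse k *s x - x'" using k by simp
  moreover have "inverse k *s x - x' \<in> F"
    using subF x(1) x' by (intro vec.subspace_diff vec.subspace_scale)
  ultimately show False using pF by simp
qed

lemma span_singleton_eq_in_plane:
  fixes p x y a :: "'F::{field,finite} ^ 'n"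
  assumes y: "y \<in> vec.span {p, x}" "y \<noteq> 0"
    and a: "dotp a (p + x) = 0" "dotp a x = 1" "dotp a y = 0"
  shows "vec.span {y} = vec.span {p + x}"
proof -
  obtain k where "y - k *s p \<in> vec.span {x}" using y(1) vec.span_breakdown_eq by blast
  then obtain m where "y - k *s p = m *s x" by (auto simp: vec.span_singleton)
  then have y_eq: "y = k *s p + m *s x" by (simp add: algebra_simps)
  have "dotp a p = -1" using a(1,2) by (simp add: dotp_simps eq_neg_iff_add_eq_0)
  then have "m = k" using a(2,3) y_eq by (simp add: dotp_simps)
  then have "y = k *s (p + x)" using y_eq by (simp add: vec.scale_right_distrib)
  moreover from this have "k \<noteq> 0" using y(2) by auto
  ultimately show ?thesis using span_singleton_scale[of k "p + x"] by simp
qed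

text \<open>
  With \<open>B\<close> the forms vanishing on the plane \<open>\<langle>p, x\<rangle>\<close>, the section of \<open>ker_form a\<close> is
  \<open>S \<inter> \<langle>p, x\<rangle> \<inter> ker_form a\<close>. Taking \<open>a\<close> vanishing on \<open>p\<close> it contains \<open>\<langle>p\<rangle>\<close>, so taking
  \<open>a\<close> vanishing on \<open>p + x\<close> it is nonempty, i.e. it is \<open>{\<langle>p + x\<rangle>}\<close>.
\<close>

lemma span_add_mem:
  fixes S :: "('F::{field,finite} ^ 'n) set set"
  assumes pts: "\<forall>P\<in>S. ppoint P" and subF: "vec.subspace F"
    and noF: "\<forall>P\<in>S. \<not> P \<subseteq> F"
    and sections: "\<forall>a\<in>forms_off F. card {P\<in>S. P \<subseteq> ker_form a} = K"
    and pS: "vec.span {p} \<in> S" and xF: "x \<in> F"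
  shows "vec.span {p + x} \<in> S"
proof (cases "x = 0")
  case True
  then show ?thesis using pS by simp
next
  case x0: False
  have pF: "p \<notin> F" using noF pS span_singleton_subset_iff[OF subF] by auto
  have K: "card {P\<in>S. P \<subseteq> ker_form a} = K" if "dotp a x \<noteq> 0" for a
    using sections that xF by (auto simp: forms_off_def)
  define B where "B = {b. dotp b p = 0 \<and> dotp b x = 0}"
  define cut where "cut a = {P\<in>S. P \<subseteq> ker_form a \<and> (\<forall>b\<in>B. P \<subseteq> ker_form b)}" for a
  have "x \<notin> vec.span {p}"
    using not_in_span_translate[OF subF pF xF x0 vec.subspace_0[OF subF]] by simp
  then obtain a1 where a1: "\<forall>w\<in>vec.span {p}. dotp a1 w = 0" "dotp a1 x = 1"
    using exists_form_separating[OF vec.subspace_span] by blast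
  have "x \<notin> vec.span {p + x}" by (rule not_in_span_translate[OF subF pF xF x0 xF])
  then obtain a2 where a2: "\<forall>w\<in>vec.span {p + x}. dotp a2 w = 0" "dotp a2 x = 1"
    using exists_form_separating[OF vec.subspace_span] by blast
  have "card (cut a1) = card (cut a2)"
    unfolding cut_def using a1(2) a2(2)
    by (intro card_section_independent[OF pts K]) (auto simp: B_def)
  moreover have "vec.span {p} \<in> cut a1"
    using pS a1(1) span_singleton_subset_ker_form vec.span_base[of p "{p}"]
    by (auto simp: cut_def B_def)
  ultimately have "cut a2 \<noteq> {}" by (auto simp: card_eq_0_iff)
  then obtain R where R: "R \<in> S" "R \<subseteq> ker_form a2" "\<forall>b\<in>B. R \<subseteq> ker_form b"
    by (auto simp: cut_def)
  have "ppoint R" using pts R(1) by blast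
  then obtain y where y: "y \<noteq> 0" "R = vec.span {y}" by (rule ppointE)
  have "y \<in> vec.span {p, x}"
  proof (rule in_span_pair_if_annihilated)
    fix b assume "dotp b p = 0" "dotp b x = 0"
    then have "R \<subseteq> ker_form b" using R(3) by (simp add: B_def)
    then show "dotp b y = 0" unfolding y(2) span_singleton_subset_ker_form .
  qed
  moreover have "dotp a2 (p + x) = 0" using a2(1) vec.span_base[of "p + x" "{p + x}"] by simp
  moreover have "dotp a2 y = 0" using R(2) y(2) span_singleton_subset_ker_form by auto
  ultimately have "R = vec.span {p + x}"
    using span_singleton_eq_in_plane[of y p x a2] y a2(2) by simp
  then show ?thesis using R(1) by simp
qed

section \<open>Affine parts and cylinders\<close>

lemma mset_set_UN_disjoint:
  assumes "finite I" "\<And>i. i \<in> I \<Longrightarrow> finite (A i)" "disjoint_family_on A I"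
  shows "mset_set (\<Union>i\<in>I. A i) = (\<Sum>i\<in>I. mset_set (A i))"
  using assms
proof (induction I rule: finite_induct)
  case empty
  then show ?case by simp
next
  case (insert i I)
  have "disjoint_family_on A I"
    using disjoint_family_on_mono[OF subset_insertI insert.prems(2)] .
  moreover have "A i \<inter> (\<Union>j\<in>I. A j) = {}"
    using insert.prems(2) insert.hyps(2) by (fastforce simp: disjoint_family_on_def)
  ultimately show ?case using insert by (simp add: mset_set_Union)
qed

lemma kspace_span_insert:
  fixes F :: "('F::{field,finite} ^ 'n) set"
  assumes subF: "vec.subspace F" and dF: "vec.dim F = r" and pF: "p \<notin> F"
  shows "kspace (r + 1) (vec.span (insert p F))"
proof -
  have spF: "vec.span F = F" using subF by simp
  have "vec.dim (insert p F) = vec.dim F + 1" using pF by (simp add: vec.dim_insert spF del: vec.span_eq_iff)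
  then show ?thesis unfolding kspace_def using dF by simp
qed

lemma span_insert_eq_of_mem:
  fixes F :: "('F::{field,finite} ^ 'n) set"
  assumes subF: "vec.subspace F" and y: "y \<in> vec.span (insert p F)" "y \<notin> F"
  shows "vec.span (insert y F) = vec.span (insert p F)"
proof -
  have span_F: "vec.span F = F" using subF by simp
  have "p \<in> vec.span (insert y F)" using vec.in_span_insert[OF y(1)] y(2) unfolding span_F by blast
  then show ?thesis
    unfolding vec.span_eq using y(1) vec.span_superset[of "insert y F"] vec.span_superset[of "insert p F"]
    by auto
qed

lemma affine_parts_disjoint:
  fixes F :: "('F::{field,finite} ^ 'n) set"
  assumes subF: "vec.subspace F" and pF: "p \<notin> F" and p'F: "p' \<notin> F"
    and ne: "vec.span (insert p F) \<noteq> vec.span (insert p' F)"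
  shows "(points_of (vec.span (insert p F)) - points_of F)
    \<inter> (points_of (vec.span (insert p' F)) - points_of F) = {}"
proof (rule ccontr)
  assume "\<not> ?thesis"
  then obtain Q where Q: "ppoint Q" "Q \<subseteq> vec.span (insert p F)" "Q \<subseteq> vec.span (insert p' F)"
    "\<not> Q \<subseteq> F" by (auto simp: points_of_def)
  obtain y where y: "Q = vec.span {y}" using ppointE[OF Q(1)] by blast
  have "y \<in> vec.span (insert p F)" "y \<in> vec.span (insert p' F)" "y \<notin> F"
    using Q(2-4) y span_singleton_subset_iff[OF vec.subspace_span] span_singleton_subset_iff[OF subF]
    by auto
  then show False using ne span_insert_eq_of_mem[OF subF] by metis
qed

lemma affine_part_eq_image:
  fixes F :: "('F::{field,finite} ^ 'n) set"
  assumes subF: "vec.subspace F" and pF: "p \<notin> F"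
  shows "points_of (vec.span (insert p F)) - points_of F = (\<lambda>x. vec.span {p + x}) ` F"
proof
  have spF: "vec.span F = F" using subF by simp
  show "points_of (vec.span (insert p F)) - points_of F \<subseteq> (\<lambda>x. vec.span {p + x}) ` F"
  proof
    fix Q assume Q: "Q \<in> points_of (vec.span (insert p F)) - points_of F"
    then have Qp: "ppoint Q" "Q \<subseteq> vec.span (insert p F)" "\<not> Q \<subseteq> F" by (auto simp: points_of_def)
    obtain y where y: "y \<noteq> 0" "Q = vec.span {y}" using ppointE[OF Qp(1)] by blast
    have yF: "y \<notin> F" using Qp(3) y(2) span_singleton_subset_iff[OF subF] by auto
    have "y \<in> vec.span (insert p F)" using Qp(2) y(2) vec.span_base[of y "{y}"] by auto
    then obtain k where k: "y - k *s p \<in> F" using vec.span_breakdown_eq spF by blast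
    have k0: "k \<noteq> 0" using k yF by auto
    define x where "x = inverse k *s (y - k *s p)"
    have xF: "x \<in> F" using k subF unfolding x_def by (intro vec.subspace_scale)
    have "k *s (p + x) = y" using k0 unfolding x_def by (simp add: algebra_simps vec.scale_right_distrib)
    then have "Q = vec.span {p + x}" using y(2) span_singleton_scale[OF k0, of "p + x"] by simp
    then show "Q \<in> (\<lambda>x. vec.span {p + x}) ` F" using xF by blast
  qed
  show "(\<lambda>x. vec.span {p + x}) ` F \<subseteq> points_of (vec.span (insert p F)) - points_of F"
  proof
    fix Q assume "Q \<in> (\<lambda>x. vec.span {p + x}) ` F"
    then obtain x where x: "x \<in> F" "Q = vec.span {p + x}" by blast
    have pxF: "p + x \<notin> F"
    proof
      assume "p + x \<in> F"
      then have "p + x - x \<in> F" using x(1) subF by (intro vec.subspace_diff)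
      then show False using pF by simp
    qed
    then have px0: "p + x \<noteq> 0" using vec.subspace_0[OF subF] by auto
    have "p + x \<in> vec.span (insert p F)"
      using x(1) by (intro vec.span_add vec.span_base) auto
    then have "Q \<subseteq> vec.span (insert p F)" using x(2) span_singleton_subset_iff[OF vec.subspace_span] by auto
    moreover have "\<not> Q \<subseteq> F" using x(2) pxF span_singleton_subset_iff[OF subF] by auto
    ultimately show "Q \<in> points_of (vec.span (insert p F)) - points_of F"
      using ppoint_span[OF px0] x(2) by (auto simp: points_of_def)
  qed
qed

lemma inj_on_span_add:
  fixes F :: "('F::{field,finite} ^ 'n) set"
  assumes subF: "vec.subspace F" and pF: "p \<notin> F"
  shows "inj_on (\<lambda>x. vec.span {p + x}) F"
proof (rule inj_onI)
  fix x x' assume x: "x \<in> F" and x': "x' \<in> F" and eq: "vec.span {p + x} = vec.span {p + x'}"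
  have "p + x' \<in> vec.span {p + x}" using eq vec.span_base[of "p + x'" "{p + x'}"] by auto
  then obtain k where k: "p + x' = k *s (p + x)" by (auto simp: vec.span_singleton)
  show "x = x'"
  proof (cases "k = 1")
    case True then show ?thesis using k by simp
  next
    case False
    have "k *s x - x' \<in> F" using x x' subF by (intro vec.subspace_diff vec.subspace_scale) auto
    then have "inverse (1 - k) *s (k *s x - x') \<in> F" using subF by (intro vec.subspace_scale)
    moreover have "(1 - k) *s p = k *s x - x'" using k
      by (simp add: algebra_simps vec.scale_left_diff_distrib vec.scale_right_distrib)
    moreover have "1 - k \<noteq> 0" using False by simp
    ultimately have "p \<in> F" by (metis vec.scale_scale left_inverse vec.scale_one)
    then show ?thesis using pF by simp
  qed
qed

lemma card_affine_part:
  fixes F :: "('F::{field,finite} ^ 'n) set"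
  assumes subF: "vec.subspace F" and pF: "p \<notin> F"
  shows "card (points_of (vec.span (insert p F)) - points_of F) = CARD('F) ^ vec.dim F"
  unfolding affine_part_eq_image[OF subF pF] card_image[OF inj_on_span_add[OF subF pF]]
  by (rule card_subspace[OF subF])

lemma translation_closed_partition:
  fixes S :: "('F::{field,finite} ^ 'n) set set"
  assumes pts: "\<forall>P\<in>S. ppoint P" and subF: "vec.subspace F"
    and noF: "\<forall>P\<in>S. \<not> P \<subseteq> F"
    and closed: "\<And>p x. vec.span {p} \<in> S \<Longrightarrow> x \<in> F \<Longrightarrow> vec.span {p + x} \<in> S"
  defines "MM \<equiv> {vec.span (insert p F) | p. vec.span {p} \<in> S}"
  shows "S = (\<Union>M\<in>MM. points_of M - points_of F)"
    and "disjoint_family_on (\<lambda>M. points_of M - points_of F) MM"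
proof -
  have pF: "p \<notin> F" if "vec.span {p} \<in> S" for p
    using noF that span_singleton_subset_iff[OF subF] by auto
  have part_span: "points_of (vec.span (insert p F)) - points_of F = (\<lambda>x. vec.span {p + x}) ` F"
    if "vec.span {p} \<in> S" for p
    by (rule affine_part_eq_image[OF subF pF[OF that]])
  show "S = (\<Union>M\<in>MM. points_of M - points_of F)"
  proof (intro equalityI subsetI)
    fix Q assume Q: "Q \<in> S"
    then have "ppoint Q" using pts by blast
    then obtain y where y: "Q = vec.span {y}" by (rule ppointE)
    then have "Q \<in> points_of (vec.span (insert y F)) - points_of F"
      using part_span[of y] Q vec.subspace_0[OF subF] by (auto intro!: image_eqI[of _ _ 0])
    moreover have "vec.span (insert y F) \<in> MM" using Q y by (auto simp: MM_def)
    ultimately show "Q \<in> (\<Union>M\<in>MM. points_of M - points_of F)" by blast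
  next
    fix Q assume "Q \<in> (\<Union>M\<in>MM. points_of M - points_of F)"
    then obtain p where "vec.span {p} \<in> S" "Q \<in> points_of (vec.span (insert p F)) - points_of F"
      by (auto simp: MM_def)
    then show "Q \<in> S" using part_span closed by auto
  qed
  show "disjoint_family_on (\<lambda>M. points_of M - points_of F) MM"
    unfolding disjoint_family_on_def MM_def using affine_parts_disjoint[OF subF] pF by blast
qed

lemma cylinder_of_translation_closed:
  fixes S :: "('F::{field,finite} ^ 'n) set set"
  assumes pts: "\<forall>P\<in>S. ppoint P" and F: "kspace r F"
    and noF: "\<forall>P\<in>S. \<not> P \<subseteq> F"
    and closed: "\<And>p x. vec.span {p} \<in> S \<Longrightarrow> x \<in> F \<Longrightarrow> vec.span {p + x} \<in> S"
    and cS: "card S = CARD('F) ^ (r + 1)"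
  shows "cylinder r (mset_set S)"
proof -
  have subF: "vec.subspace F" and dF: "vec.dim F = r" using F by (auto simp: kspace_def)
  define part where "part M = points_of M - points_of F" for M
  define MM where "MM = {vec.span (insert p F) | p. vec.span {p} \<in> S}"
  note partition = translation_closed_partition[OF pts subF noF closed, folded MM_def part_def]
  have pF: "p \<notin> F" if "vec.span {p} \<in> S" for p
    using noF that span_singleton_subset_iff[OF subF] by auto
  have card_part: "card (part M) = CARD('F) ^ r" if "M \<in> MM" for M
    using that card_affine_part[OF subF pF] dF by (auto simp: MM_def part_def)
  have "CARD('F) * CARD('F) ^ r = card (\<Union>M\<in>MM. part M)" using cS partition(1) by simp
  also have "\<dots> = card MM * CARD('F) ^ r"
    using partition(2) card_part by (simp add: card_UN_disjoint disjoint_family_on_def)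
  finally have card_MM: "card MM = CARD('F)" by simp
  have "finite MM" by simp
  then obtain Ls where Ls: "set Ls = MM" "distinct Ls" using finite_distinct_list by blast
  have "mset_set S = (\<Sum>M\<in>MM. mset_set (part M))"
    using partition mset_set_UN_disjoint[OF _ _ partition(2)] by simp
  also have "\<dots> = sum_list (map (\<lambda>L. mset_set (points_of L - points_of F)) Ls)"
    unfolding sum_list_distinct_conv_sum_set[OF Ls(2)] Ls(1) part_def ..
  finally have "mset_set S = sum_list (map (\<lambda>L. mset_set (points_of L - points_of F)) Ls)" .
  moreover have "length Ls = CARD('F)" using distinct_card[OF Ls(2)] Ls(1) card_MM by simp
  moreover have "kspace (r + 1) L \<and> F \<subseteq> L" if "L \<in> set Ls" for L
    using that Ls(1) kspace_span_insert[OF subF dF pF] by (auto simp: MM_def intro: vec.span_base)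
  moreover have "size (mset_set S) = CARD('F) ^ (r + 1)" using cS by simp
  ultimately show ?thesis unfolding cylinder_def using F by blast
qed

theorem mainTheorem10:
  fixes S :: "('F::{field,finite} ^ 'n) set set" and r :: nat
  assumes "r \<ge> 1"
    and "\<forall>P\<in>S. ppoint P"
    and "spanning S"
    and "qr_divisible r S"
    and "card S = CARD('F) ^ (r + 1)"
    and "\<exists>L F. kspace (r + 1) L \<and> kspace r F \<and> F \<subseteq> L \<and> points_of L - points_of F \<subseteq> S"
  shows "cylinder r (mset_set S)"
proof -
  note pts = assms(2) and div = assms(4) and cS = assms(5)
  obtain L F where L: "kspace (r + 1) L" and F: "kspace r F" and FL: "F \<subseteq> L"
    and LFS: "points_of L - points_of F \<subseteq> S"
    using assms(6) by blast
  have subF: "vec.subspace F" using F by (simp add: kspace_def)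
  note sections = sections_off_base_uniform[OF pts div cS L F FL LFS]
  show ?thesis
  proof (rule cylinder_of_translation_closed[OF pts F sections(1) _ cS])
    fix p x assume "vec.span {p} \<in> S" "x \<in> F"
    then show "vec.span {p + x} \<in> S" by (rule span_add_mem[OF pts subF sections])
  qed
qed

end
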